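(* Let $p,q\in\mathbb{N}$ be coprime, $k\in\mathbb{N}$ squarefree, $m=-pk$, $n=qk$. (i) If the quadratic forms $X^2+mY^2$ and $X^2+nY^2$ are concordant due to $4$- or $8$-torsion, then $k=1$. (ii) If they are concordant due to $3$- or $6$-torsion, then $k=1$ or $k=3$.
   Context: For nonzero integers $m\neq n$, the forms $X^2+mY^2$ and $X^2+nY^2$ are concordant if the system $X^2+mY^2=Z^2$, $X^2+nY^2=W^2$ has an integer solution with $Y\neq0$. Let $Q(m,n)\subset\mathbb{P}^3$ be the curve $X_0^2+mX_1^2=X_2^2,\ X_0^2+nX_1^2=X_3^2$ and $E(m,n)$ the elliptic curve $y^2=x(x+m)(x+n)$ (projectively $Y^2T=X(X+mT)(X+nT)$, coordinates $(T:X:Y)$). There is an isomorphism of curves $\varphi:Q(m,n)\to E(m,n)$ extending the rational map $(X_0:X_1:X_2:X_3)\mapsto\bigl(nX_2-mX_3+(m-n)X_0 : mn(X_3-X_2) : mn(m-n)X_1\bigr)$; it maps the trivial points $(1:0:\pm1:\pm1)$ to the neutral element and the 2-torsion points, and every nontrivial rational solution to a rational point of order $>2$. The forms are said to be concordant due to $N$-torsion if some nontrivial rational solution $(X_0:X_1:X_2:X_3)$ (i.e. with $X_1\neq0$) is mapped by $\varphi$ to a rational point of $E(m,n)$ of order exactly $N$; equivalently, $E(m,n)(\mathbb{Q})$ has a point of order $N$. *)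

theory Defs
  imports "HOL-Computational_Algebra.Computational_Algebra"
begin

text \<open>Rational points of E(m,n): y^2 = x(x+m)(x+n) = x^3 + (m+n) x^2 + mn x.
  None is the point at infinity (the neutral element), Some (x,y) an affine point.\<close>

type_synonym ecpt = "(rat \<times> rat) option"

definition on_E :: "int \<Rightarrow> int \<Rightarrow> ecpt \<Rightarrow> bool" where
  "on_E m n P = (case P of None \<Rightarrow> True
     | Some (x, y) \<Rightarrow> y^2 = x * (x + of_int m) * (x + of_int n))"

text \<open>Chord-and-tangent group law on the Weierstrass curve
  y^2 = x^3 + a2 x^2 + a4 x with a2 = m+n, a4 = mn.\<close>

definition E_add :: "int \<Rightarrow> int \<Rightarrow> ecpt \<Rightarrow> ecpt \<Rightarrow> ecpt" where
  "E_add m n P Q = (case P of None \<Rightarrow> Q | Some (x1, y1) \<Rightarrow>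
     (case Q of None \<Rightarrow> P | Some (x2, y2) \<Rightarrow>
       (if x1 = x2 \<and> y1 = - y2 then None
        else let a2 = of_int (m + n); a4 = of_int (m * n);
                 l = (if x1 = x2 then (3 * x1^2 + 2 * a2 * x1 + a4) / (2 * y1)
                      else (y2 - y1) / (x2 - x1));
                 x3 = l^2 - a2 - x1 - x2;
                 y3 = - (l * (x3 - x1) + y1)
             in Some (x3, y3))))"

fun E_mult :: "int \<Rightarrow> int \<Rightarrow> nat \<Rightarrow> ecpt \<Rightarrow> ecpt" where
  "E_mult m n 0 P = None"
| "E_mult m n (Suc d) P = E_add m n P (E_mult m n d P)"

definition has_order :: "int \<Rightarrow> int \<Rightarrow> ecpt \<Rightarrow> nat \<Rightarrow> bool" where
  "has_order m n P N = (0 < N \<and> E_mult m n N P = None \<and>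
     (\<forall>d. 0 < d \<and> d < N \<longrightarrow> E_mult m n d P \<noteq> None))"

text \<open>Rational points of Q(m,n) (given by rational representatives).\<close>

definition on_Q :: "int \<Rightarrow> int \<Rightarrow> rat \<Rightarrow> rat \<Rightarrow> rat \<Rightarrow> rat \<Rightarrow> bool" where
  "on_Q m n X0 X1 X2 X3 = (X0^2 + of_int m * X1^2 = X2^2 \<and> X0^2 + of_int n * X1^2 = X3^2)"

text \<open>The map phi, evaluated by the given formula
  (T:X:Y) = (n X2 - m X3 + (m-n) X0 : mn (X3 - X2) : mn (m-n) X1),
  converted to an affine point (X/T, Y/T), or to the point at infinity when T = 0.
  For nontrivial points (X1 \<noteq> 0) the Y-coordinate is nonzero, so the formula
  defines the image point.\<close>

definition phi :: "int \<Rightarrow> int \<Rightarrow> rat \<Rightarrow> rat \<Rightarrow> rat \<Rightarrow> rat \<Rightarrow> ecpt" where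
  "phi m n X0 X1 X2 X3 =
     (let mm = of_int m; nn = of_int n;
          T = nn * X2 - mm * X3 + (mm - nn) * X0;
          X = mm * nn * (X3 - X2);
          Y = mm * nn * (mm - nn) * X1
      in if T = 0 then None else Some (X / T, Y / T))"

definition concordant_torsion :: "int \<Rightarrow> int \<Rightarrow> nat \<Rightarrow> bool" where
  "concordant_torsion m n N = (\<exists>X0 X1 X2 X3. on_Q m n X0 X1 X2 X3 \<and> X1 \<noteq> 0 \<and>
      has_order m n (phi m n X0 X1 X2 X3) N)"

end

theory Submission
  imports Defs
begin

(* If E(m,n):
   y^2 = x(x+m)(x+n) has a rational point of order 4 or 8 then k = 1; if it has one of
   order 3 or 6 then k = 1 or k = 3.  Concordance due to N-torsion supplies such a point,
   because phi maps Q(m,n) into E(m,n).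

   Part (i) is a 2-descent.  Along a chord the product of the (x - r) over the three points
   is a square for each root r of the cubic; iterating along P, 2P, ..., hP for P of order
   2h with h even shows that e - r is a square, where hP = (e,0).  Signs force e = -m, so
   pk and (p+q)k are rational squares, and squarefreeness with coprimality gives k = 1.

   A point of order 3 (or 4P for P of order 6, via the invariance of x(2R)
   under translation by 2-torsion) satisfies x(2R) = x(R).  This yields rationals c, d with
   m(c+d)^2 = c^3(c+2d) and n(c+d)^2 = d^3(d+2c); clearing denominators and comparing prime
   divisors shows that 3 is the only prime that can divide k. *)

section \<open>The chord-and-tangent law\<close>

definition cubic :: "int \<Rightarrow> int \<Rightarrow> rat \<Rightarrow> rat" where
  "cubic m n x = x * (x + of_int m) * (x + of_int n)"

definition neg_pt :: "ecpt \<Rightarrow> ecpt" where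
  "neg_pt P = map_option (\<lambda>(x, y). (x, - y)) P"

lemma neg_pt_simps [simp]: "neg_pt None = None" "neg_pt (Some (x, y)) = Some (x, - y)"
  by (simp_all add: neg_pt_def)

lemma on_E_None [simp]: "on_E m n None"
  by (simp add: on_E_def)

lemma on_E_Some: "on_E m n (Some (x, y)) \<longleftrightarrow> y^2 = cubic m n x"
  by (simp add: on_E_def cubic_def)

definition slope :: "int \<Rightarrow> int \<Rightarrow> rat \<Rightarrow> rat \<Rightarrow> rat \<Rightarrow> rat \<Rightarrow> rat" where
  "slope m n x1 y1 x2 y2 =
     (if x1 = x2 then (3 * x1^2 + 2 * (of_int m + of_int n) * x1 + of_int m * of_int n) / (2 * y1)
      else (y2 - y1) / (x2 - x1))"

lemma E_add_None_left [simp]: "E_add m n None Q = Q"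
  by (simp add: E_add_def)

lemma E_add_None_right [simp]: "E_add m n P None = P"
  by (cases P) (auto simp: E_add_def)

lemma E_add_eq_None_iff:
  "E_add m n (Some (x1, y1)) (Some (x2, y2)) = None \<longleftrightarrow> x1 = x2 \<and> y1 = - y2"
  by (simp add: E_add_def Let_def)

lemma E_add_Some_Some:
  assumes "\<not> (x1 = x2 \<and> y1 = - y2)"
  shows "E_add m n (Some (x1, y1)) (Some (x2, y2)) =
    (let l = slope m n x1 y1 x2 y2; x3 = l^2 - (of_int m + of_int n) - x1 - x2
     in Some (x3, - (l * (x3 - x1) + y1)))"
  using assms by (simp add: E_add_def slope_def Let_def)

lemma line_cubic_factorization:
  fixes x1 x2 x3 l y1 M N :: rat
  assumes on_curve: "y1^2 = x1 * (x1 + M) * (x1 + N)"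
    and sum_roots: "x3 = l^2 - (M + N) - x1 - x2"
    and pair_sums: "M * N - 2 * l * (y1 - l * x1) = x1 * x2 + x1 * x3 + x2 * x3"
  shows "z * (z + M) * (z + N) - (l * (z - x1) + y1)^2 = (z - x1) * (z - x2) * (z - x3)"
proof -
  have "(y1 - l * x1)^2 = x1 * x2 * x3"
    using on_curve sum_roots pair_sums by algebra
  then show ?thesis using sum_roots pair_sums by algebra
qed

lemma chord_pair_sums:
  fixes x1 x2 l y1 y2 M N :: rat
  assumes "y1^2 = x1 * (x1 + M) * (x1 + N)" and "y2^2 = x2 * (x2 + M) * (x2 + N)"
    and ne: "x1 \<noteq> x2" and l: "l * (x2 - x1) = y2 - y1"
  shows "M * N - 2 * l * (y1 - l * x1) =
    x1 * x2 + x1 * (l^2 - (M + N) - x1 - x2) + x2 * (l^2 - (M + N) - x1 - x2)"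
proof -
  have "(x1 - x2) * (M * N - 2 * l * (y1 - l * x1) -
      (x1 * x2 + x1 * (l^2 - (M + N) - x1 - x2) + x2 * (l^2 - (M + N) - x1 - x2))) = 0"
    using assms(1,2) l by algebra
  then show ?thesis using ne by simp
qed

lemma tangent_pair_sums:
  fixes x1 l y1 M N :: rat
  assumes "y1^2 = x1 * (x1 + M) * (x1 + N)" and "2 * y1 * l = 3 * x1^2 + 2 * (M + N) * x1 + M * N"
  shows "M * N - 2 * l * (y1 - l * x1) =
    x1 * x1 + x1 * (l^2 - (M + N) - x1 - x1) + x1 * (l^2 - (M + N) - x1 - x1)"
  using assms by algebra

lemma E_add_line:
  fixes m n :: int
  defines "a2 \<equiv> of_int m + of_int n :: rat" and "a4 \<equiv> of_int m * of_int n :: rat"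
  assumes c1: "y1^2 = cubic m n x1" and c2: "y2^2 = cubic m n x2"
    and nc: "\<not> (x1 = x2 \<and> y1 = - y2)"
  obtains l where
    "E_add m n (Some (x1, y1)) (Some (x2, y2)) =
       Some (l^2 - a2 - x1 - x2, - (l * (l^2 - a2 - x1 - x2 - x1) + y1))"
    and "\<And>z. cubic m n z - (l * (z - x1) + y1)^2 = (z - x1) * (z - x2) * (z - (l^2 - a2 - x1 - x2))"
    and "a4 - 2 * l * (y1 - l * x1) = x1 * x2 + x1 * (l^2 - a2 - x1 - x2) + x2 * (l^2 - a2 - x1 - x2)"
    and "x1 = x2 \<Longrightarrow> y2 = y1 \<and> y1 \<noteq> 0 \<and> 2 * y1 * l = 3 * x1^2 + 2 * a2 * x1 + a4"
    and "l * (x2 - x1) = y2 - y1"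
proof -
  define l where "l = slope m n x1 y1 x2 y2"
  have e1: "y1^2 = x1 * (x1 + of_int m) * (x1 + of_int n)"
    and e2: "y2^2 = x2 * (x2 + of_int m) * (x2 + of_int n)"
    using c1 c2 by (simp_all add: cubic_def)
  have tangent: "y2 = y1 \<and> y1 \<noteq> 0 \<and> 2 * y1 * l = 3 * x1^2 + 2 * a2 * x1 + a4" if "x1 = x2"
  proof -
    have "y2^2 = y1^2" using c1 c2 that by simp
    then have "y2 = y1 \<or> y2 = - y1" by (simp add: power2_eq_iff)
    with nc that have "y2 = y1" "y1 \<noteq> 0" by auto
    then show ?thesis using that by (simp add: l_def slope_def a2_def a4_def field_simps)
  qed
  have chord: "l * (x2 - x1) = y2 - y1"
    using tangent by (cases "x1 = x2") (simp_all add: l_def slope_def)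
  have pair_sums: "a4 - 2 * l * (y1 - l * x1) =
      x1 * x2 + x1 * (l^2 - a2 - x1 - x2) + x2 * (l^2 - a2 - x1 - x2)"
  proof (cases "x1 = x2")
    case True
    then show ?thesis using tangent_pair_sums[OF e1] tangent by (simp add: a2_def a4_def)
  next
    case False
    then show ?thesis using chord_pair_sums[OF e1 e2 False chord] by (simp add: a2_def a4_def)
  qed
  have "cubic m n z - (l * (z - x1) + y1)^2 = (z - x1) * (z - x2) * (z - (l^2 - a2 - x1 - x2))" for z
    unfolding cubic_def a2_def
    by (rule line_cubic_factorization[OF e1 refl]) (use pair_sums in \<open>simp add: a2_def a4_def\<close>)
  moreover have "E_add m n (Some (x1, y1)) (Some (x2, y2)) =
      Some (l^2 - a2 - x1 - x2, - (l * (l^2 - a2 - x1 - x2 - x1) + y1))"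
    by (simp add: E_add_Some_Some[OF nc] Let_def l_def a2_def)
  ultimately show ?thesis using that pair_sums tangent chord by blast
qed

text \<open>The sum lies on the curve: evaluate the factorization along the line at its third root.\<close>

lemma E_add_closed:
  assumes "on_E m n P" "on_E m n Q" shows "on_E m n (E_add m n P Q)"
proof (cases "P = None \<or> Q = None")
  case True then show ?thesis using assms by auto
next
  case False
  then obtain x1 y1 x2 y2 where P: "P = Some (x1, y1)" and Q: "Q = Some (x2, y2)" by auto
  have c1: "y1^2 = cubic m n x1" and c2: "y2^2 = cubic m n x2"
    using assms P Q by (simp_all add: on_E_Some)
  show ?thesis
  proof (cases "x1 = x2 \<and> y1 = - y2")
    case True then show ?thesis using P Q by (simp add: E_add_def)
  next
    case False
    obtain l where E: "E_add m n (Some (x1, y1)) (Some (x2, y2)) =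
        Some (l^2 - (of_int m + of_int n) - x1 - x2,
              - (l * (l^2 - (of_int m + of_int n) - x1 - x2 - x1) + y1))"
      and Z: "\<And>z. cubic m n z - (l * (z - x1) + y1)^2 =
        (z - x1) * (z - x2) * (z - (l^2 - (of_int m + of_int n) - x1 - x2))"
      using E_add_line[OF c1 c2 False] by blast
    show ?thesis using Z[of "l^2 - (of_int m + of_int n) - x1 - x2"]
      by (simp add: P Q E on_E_Some power2_eq_square algebra_simps)
  qed
qed

lemma E_add_comm:
  assumes "on_E m n P" "on_E m n Q" shows "E_add m n P Q = E_add m n Q P"
proof (cases "P = None \<or> Q = None")
  case True then show ?thesis by auto
next
  case False
  then obtain x1 y1 x2 y2 where P: "P = Some (x1, y1)" and Q: "Q = Some (x2, y2)" by auto
  have c1: "y1^2 = cubic m n x1" and c2: "y2^2 = cubic m n x2"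
    using assms P Q by (simp_all add: on_E_Some)
  let ?a2 = "of_int m + of_int n :: rat"
  show ?thesis
  proof (cases "x1 = x2 \<and> y1 = - y2")
    case True then show ?thesis using P Q by (simp add: E_add_def)
  next
    case False
    have False': "\<not> (x2 = x1 \<and> y2 = - y1)" using False by auto
    show ?thesis
    proof (cases "x1 = x2")
      case True
      then have "y2 = y1" using E_add_line[OF c1 c2 False] by metis
      then show ?thesis using True P Q by simp
    next
      case ne: False
      obtain l where E1: "E_add m n (Some (x1, y1)) (Some (x2, y2)) =
          Some (l^2 - ?a2 - x1 - x2, - (l * (l^2 - ?a2 - x1 - x2 - x1) + y1))"
        and l: "l * (x2 - x1) = y2 - y1"
        using E_add_line[OF c1 c2 False] by blast
      obtain l' where E2: "E_add m n (Some (x2, y2)) (Some (x1, y1)) =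
          Some (l'^2 - ?a2 - x2 - x1, - (l' * (l'^2 - ?a2 - x2 - x1 - x2) + y2))"
        and l': "l' * (x1 - x2) = y1 - y2"
        using E_add_line[OF c2 c1 False'] by blast
      have "(l' - l) * (x1 - x2) = 0" using l l' by algebra
      then have "l' = l" using ne by simp
      moreover have "- (l * (l^2 - ?a2 - x1 - x2 - x1) + y1) = - (l * (l^2 - ?a2 - x2 - x1 - x2) + y2)"
        using l by algebra
      ultimately show ?thesis using P Q E1 E2 by (simp add: algebra_simps)
    qed
  qed
qed

text \<open>Negation is an automorphism: reflecting both points reflects the line.\<close>

lemma E_add_neg: "E_add m n (neg_pt P) (neg_pt Q) = neg_pt (E_add m n P Q)"
proof (cases "P = None \<or> Q = None")
  case True then show ?thesis by auto
next
  case False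
  then obtain x1 y1 x2 y2 where P: "P = Some (x1, y1)" and Q: "Q = Some (x2, y2)" by auto
  show ?thesis
  proof (cases "x1 = x2 \<and> y1 = - y2")
    case True then show ?thesis using P Q by (simp add: E_add_def)
  next
    case False
    have False': "\<not> (x1 = x2 \<and> - y1 = - (- y2))" using False by auto
    have "slope m n x1 (- y1) x2 (- y2) = - slope m n x1 y1 x2 y2"
      by (simp add: slope_def) (metis minus_diff_eq minus_divide_left)
    then show ?thesis using P Q False False' by (simp add: E_add_Some_Some Let_def)
  qed
qed

text \<open>Since \<open>m, n, 0\<close> are distinct, the cubic has no double root; this excludes a tangent
  that meets the curve again at a point of order 2.\<close>

lemma cubic_no_double_root:
  assumes mn: "m \<noteq> 0" "n \<noteq> 0" "m \<noteq> n" and Z: "\<And>z. cubic m n z = (z - a)^2 * (z - b)"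
  shows False
proof -
  have "a = 0 \<or> b = 0" using Z[of 0] by (simp add: cubic_def)
  moreover have "- of_int m = a \<or> - of_int m = b" using Z[of "- of_int m"] by (simp add: cubic_def)
  moreover have "- of_int n = a \<or> - of_int n = b" using Z[of "- of_int n"] by (simp add: cubic_def)
  ultimately show False using mn by auto
qed

text \<open>Undoing an addition: the line through \<open>A + B\<close> and \<open>-A\<close> is the reflection of the
  line through \<open>A\<close> and \<open>B\<close>, so its slope is \<open>-l\<close> and its third point is \<open>B\<close>.\<close>

lemma E_add_cancel_affine:
  fixes m n :: int
  defines "a2 \<equiv> of_int m + of_int n :: rat" and "a4 \<equiv> of_int m * of_int n :: rat"
  assumes mn: "m \<noteq> 0" "n \<noteq> 0" "m \<noteq> n"
    and c1: "y1^2 = cubic m n x1" and c2: "y2^2 = cubic m n x2" and nc: "\<not> (x1 = x2 \<and> y1 = - y2)"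
    and S: "E_add m n (Some (x1, y1)) (Some (x2, y2)) = Some (x3, y3)"
  shows "E_add m n (Some (x3, y3)) (Some (x1, - y1)) = Some (x2, y2)"
proof -
  obtain l where E: "E_add m n (Some (x1, y1)) (Some (x2, y2)) =
       Some (l^2 - a2 - x1 - x2, - (l * (l^2 - a2 - x1 - x2 - x1) + y1))"
    and Z: "\<And>z. cubic m n z - (l * (z - x1) + y1)^2 = (z - x1) * (z - x2) * (z - (l^2 - a2 - x1 - x2))"
    and pair_sums: "a4 - 2 * l * (y1 - l * x1) = x1 * x2 + x1 * (l^2 - a2 - x1 - x2) + x2 * (l^2 - a2 - x1 - x2)"
    and tangent: "x1 = x2 \<Longrightarrow> y2 = y1 \<and> y1 \<noteq> 0 \<and> 2 * y1 * l = 3 * x1^2 + 2 * a2 * x1 + a4"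
    and chord: "l * (x2 - x1) = y2 - y1"
    using E_add_line[OF c1 c2 nc] unfolding a2_def a4_def by blast
  have x3: "x3 = l^2 - a2 - x1 - x2" and y3: "y3 = - (l * (x3 - x1) + y1)"
    using S E by auto
  have back_tangent: "y1 \<noteq> 0 \<and> 2 * y1 * l = 3 * x1^2 + 2 * a2 * x1 + a4" if x31: "x3 = x1"
  proof -
    have "y1 \<noteq> 0"
    proof
      assume y0: "y1 = 0"
      then have "cubic m n z = (z - x1)^2 * (z - (x2 - l^2))" for z
        using Z[of z] x31 unfolding x3 by algebra
      then show False using cubic_no_double_root[OF mn] by blast
    qed
    moreover have "2 * y1 * l = 3 * x1^2 + 2 * a2 * x1 + a4"
    proof (cases "x1 = x2")
      case True then show ?thesis using tangent by blast
    next
      case False show ?thesis using pair_sums x31 unfolding x3 by algebra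
    qed
    ultimately show ?thesis by blast
  qed
  have nc': "\<not> (x3 = x1 \<and> y3 = - (- y1))"
    using back_tangent y3 by auto
  have "slope m n x3 y3 x1 (- y1) = - l"
  proof (cases "x3 = x1")
    case True
    then show ?thesis using back_tangent y3 by (simp add: slope_def a2_def a4_def field_simps)
  next
    case False
    then show ?thesis unfolding y3 by (simp add: slope_def field_simps)
  qed
  then have sum: "E_add m n (Some (x3, y3)) (Some (x1, - y1)) =
      Some ((- l)^2 - a2 - x3 - x1, - ((- l) * (((- l)^2 - a2 - x3 - x1) - x3) + y3))"
    by (simp only: E_add_Some_Some[OF nc'] Let_def a2_def)
  have x2: "(- l)^2 - a2 - x3 - x1 = x2" unfolding x3 by simp
  have y2: "- ((- l) * (x2 - x3) + y3) = y2" using chord unfolding y3 by algebra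
  show ?thesis using sum unfolding x2 y2 .
qed

lemma E_add_cancel:
  assumes mn: "m \<noteq> 0" "n \<noteq> 0" "m \<noteq> n" and A: "on_E m n A" and B: "on_E m n B"
  shows "E_add m n (E_add m n A B) (neg_pt A) = B"
proof (cases "A = None \<or> B = None")
  case True then show ?thesis by (cases A; cases B) (auto simp: E_add_def)
next
  case False
  then obtain x1 y1 x2 y2 where A': "A = Some (x1, y1)" and B': "B = Some (x2, y2)" by auto
  have c1: "y1^2 = cubic m n x1" and c2: "y2^2 = cubic m n x2"
    using A B A' B' by (simp_all add: on_E_Some)
  show ?thesis
  proof (cases "x1 = x2 \<and> y1 = - y2")
    case True then show ?thesis using A' B' by (simp add: E_add_def)
  next
    case False
    then obtain x3 y3 where S: "E_add m n (Some (x1, y1)) (Some (x2, y2)) = Some (x3, y3)"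
      by (metis E_add_eq_None_iff not_None_eq surj_pair)
    show ?thesis using E_add_cancel_affine[OF mn c1 c2 False S] A' B' S by simp
  qed
qed

section \<open>Multiples of a point\<close>

lemma E_mult_closed: "on_E m n P \<Longrightarrow> on_E m n (E_mult m n d P)"
  by (induction d) (simp_all add: E_add_closed)

text \<open>If \<open>NP = 0\<close> then \<open>(N - j)P = -(jP)\<close>.\<close>

lemma E_mult_complement:
  assumes mn: "m \<noteq> 0" "n \<noteq> 0" "m \<noteq> n" and P: "on_E m n P" and N: "E_mult m n N P = None"
  shows "j \<le> N \<Longrightarrow> E_mult m n (N - j) P = neg_pt (E_mult m n j P)"
proof (induction j)
  case 0 then show ?case using N by simp
next
  case (Suc j)
  then have IH: "E_mult m n (N - j) P = neg_pt (E_mult m n j P)" by simp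
  have NS: "N - j = Suc (N - Suc j)" using Suc.prems by simp
  let ?B = "E_mult m n (N - Suc j) P"
  have "?B = E_add m n (E_add m n P ?B) (neg_pt P)"
    using E_add_cancel[OF mn P E_mult_closed[OF P]] by simp
  also have "E_add m n P ?B = E_mult m n (N - j) P" using NS by simp
  also have "\<dots> = neg_pt (E_mult m n j P)" by (rule IH)
  also have "E_add m n (neg_pt (E_mult m n j P)) (neg_pt P) = neg_pt (E_add m n (E_mult m n j P) P)"
    by (rule E_add_neg)
  also have "E_add m n (E_mult m n j P) P = E_add m n P (E_mult m n j P)"
    by (rule E_add_comm[OF E_mult_closed[OF P] P])
  finally show ?case by simp
qed

lemma E_mult_shift:
  assumes "E_mult m n a P = E_mult m n b P" shows "E_mult m n (a + j) P = E_mult m n (b + j) P"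
  by (induction j) (use assms in auto)

lemma has_order_nonzero:
  assumes "has_order m n P N" "0 < i" "i < N" shows "E_mult m n i P \<noteq> None"
  using assms by (simp add: has_order_def)

lemma self_negative_multiple:
  assumes mn: "m \<noteq> 0" "n \<noteq> 0" "m \<noteq> n" and P: "on_E m n P" and H: "has_order m n P N"
    and d: "0 < d" "d < N" and T: "E_mult m n d P = neg_pt (E_mult m n d P)"
  shows "2 * d = N"
proof (rule ccontr)
  assume ne: "2 * d \<noteq> N"
  have N0: "E_mult m n N P = None" using H by (simp add: has_order_def)
  have "E_mult m n (N - d) P = neg_pt (E_mult m n d P)"
    using E_mult_complement[OF mn P N0] d by simp
  with T have eq: "E_mult m n (N - d) P = E_mult m n d P" by simp
  obtain d' where "E_mult m n (2 * d') P = None" "0 < 2 * d'" "2 * d' < N"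
  proof (cases "d < N - d")
    case True
    have "E_mult m n (N - d + d) P = E_mult m n (d + d) P" by (rule E_mult_shift[OF eq])
    then show ?thesis using that[of d] N0 d True by (simp add: mult_2)
  next
    case False
    have "E_mult m n (d + (N - d)) P = E_mult m n ((N - d) + (N - d)) P"
      by (rule E_mult_shift[OF eq[symmetric]])
    then show ?thesis using that[of "N - d"] N0 d False ne by (simp add: mult_2)
  qed
  then show False using has_order_nonzero[OF H] by blast
qed

lemma regular_multiple:
  assumes mn: "m \<noteq> 0" "n \<noteq> 0" "m \<noteq> n" and P: "on_E m n P" and H: "has_order m n P N"
    and i: "0 < i" "i < N" "2 * i \<noteq> N"
  obtains xi yi where "E_mult m n i P = Some (xi, yi)" "yi \<noteq> 0" "cubic m n xi \<noteq> 0"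
proof -
  obtain xi yi where S: "E_mult m n i P = Some (xi, yi)" using has_order_nonzero[OF H i(1,2)] by auto
  have "yi \<noteq> 0"
  proof
    assume "yi = 0"
    then have "E_mult m n i P = neg_pt (E_mult m n i P)" using S by simp
    then show False using self_negative_multiple[OF mn P H i(1,2)] i(3) by simp
  qed
  moreover have "yi^2 = cubic m n xi" using E_mult_closed[OF P, of i] S by (simp add: on_E_Some)
  ultimately show ?thesis using that S by (metis power_not_zero)
qed

lemma half_order_point:
  assumes mn: "m \<noteq> 0" "n \<noteq> 0" "m \<noteq> n" and P: "on_E m n P" and H: "has_order m n P (2 * h)"
  obtains e where "E_mult m n h P = Some (e, 0)" "cubic m n e = 0"
proof -
  have "0 < h" using H by (simp add: has_order_def)
  have N0: "E_mult m n (2 * h) P = None" using H by (simp add: has_order_def)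
  have "E_mult m n (2 * h - h) P = neg_pt (E_mult m n h P)"
    using E_mult_complement[OF mn P N0, of h] by simp
  moreover obtain e y where S: "E_mult m n h P = Some (e, y)"
    using has_order_nonzero[OF H, of h] \<open>0 < h\<close> by auto
  ultimately have "y = 0" by simp
  moreover have "y^2 = cubic m n e" using E_mult_closed[OF P, of h] S by (simp add: on_E_Some)
  ultimately show ?thesis using that S by simp
qed

section \<open>From concordant forms to torsion points\<close>

lemma phi_identity:
  fixes M N X0 X1 X2 X3 :: rat
  assumes "X0^2 + M * X1^2 = X2^2" "X0^2 + N * X1^2 = X3^2"
  defines "T \<equiv> N * X2 - M * X3 + (M - N) * X0"
  shows "(M * N * (M - N) * X1)^2 * T = (M * N * (X3 - X2)) * (M * N * (X3 - X2) + M * T) * (M * N * (X3 - X2) + N * T)"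
  unfolding T_def using assms(1,2) by algebra

lemma phi_on_E:
  assumes "on_Q m n X0 X1 X2 X3" shows "on_E m n (phi m n X0 X1 X2 X3)"
proof -
  define M where "M = (of_int m :: rat)"
  define N where "N = (of_int n :: rat)"
  define T where "T = N * X2 - M * X3 + (M - N) * X0"
  define X where "X = M * N * (X3 - X2)"
  define Y where "Y = M * N * (M - N) * X1"
  have q: "X0^2 + M * X1^2 = X2^2" "X0^2 + N * X1^2 = X3^2"
    using assms by (simp_all add: on_Q_def M_def N_def)
  have key: "Y^2 * T = X * (X + M * T) * (X + N * T)"
    using phi_identity[OF q] by (simp add: X_def Y_def T_def)
  have ph: "phi m n X0 X1 X2 X3 = (if T = 0 then None else Some (X / T, Y / T))"
    by (simp add: phi_def Let_def M_def N_def T_def X_def Y_def)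
  show ?thesis
  proof (cases "T = 0")
    case False
    have "(Y / T)^2 = (Y^2 * T) / T^3" using False by (simp add: power2_eq_square power3_eq_cube)
    also have "\<dots> = (X * (X + M * T) * (X + N * T)) / T^3" by (simp add: key)
    also have "\<dots> = (X / T) * (X / T + M) * (X / T + N)"
      using False by (simp add: field_simps power3_eq_cube)
    finally show ?thesis using ph False by (simp add: on_E_Some cubic_def M_def N_def)
  qed (use ph in simp)
qed

lemma concordant_torsion_point:
  assumes "concordant_torsion m n N"
  obtains P where "on_E m n P" "has_order m n P N"
  using assms phi_on_E unfolding concordant_torsion_def by blast


section \<open>Part (i): a 2-descent for points of order divisible by 4\<close>

text \<open>Along a chord the three \<open>x - r\<close> multiply to a square, for every root \<open>r\<close> of the cubic:
  evaluate the factorization of the cubic along the line at \<open>z = r\<close>.\<close>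

lemma chord_product_square:
  assumes c1: "y1^2 = cubic m n x1" and c2: "y2^2 = cubic m n x2"
    and S: "E_add m n (Some (x1, y1)) (Some (x2, y2)) = Some (x3, y3)" and r: "cubic m n r = 0"
  shows "\<exists>s. (x1 - r) * (x2 - r) * (x3 - r) = s^2"
proof -
  have nc: "\<not> (x1 = x2 \<and> y1 = - y2)" using S E_add_eq_None_iff[of m n x1 y1 x2 y2] by auto
  obtain l where E: "E_add m n (Some (x1, y1)) (Some (x2, y2)) =
       Some (l^2 - (of_int m + of_int n) - x1 - x2, - (l * (l^2 - (of_int m + of_int n) - x1 - x2 - x1) + y1))"
    and Z: "\<And>z. cubic m n z - (l * (z - x1) + y1)^2 =
       (z - x1) * (z - x2) * (z - (l^2 - (of_int m + of_int n) - x1 - x2))"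
    using E_add_line[OF c1 c2 nc] by blast
  have "x3 = l^2 - (of_int m + of_int n) - x1 - x2" using S E by simp
  then have "(x1 - r) * (x2 - r) * (x3 - r) = (l * (r - x1) + y1)^2"
    using Z[of r] r by algebra
  then show ?thesis by blast
qed

definition xof :: "ecpt \<Rightarrow> rat" where
  "xof P = fst (the P)"

lemma multiples_descent:
  assumes P: "on_E m n P" and r: "cubic m n r = 0"
    and defined: "\<And>i. 0 < i \<Longrightarrow> i \<le> h \<Longrightarrow> E_mult m n i P \<noteq> None"
    and off_root: "\<And>i. 0 < i \<Longrightarrow> i < h \<Longrightarrow> xof (E_mult m n i P) \<noteq> r"
  shows "1 \<le> j \<Longrightarrow> j \<le> h \<Longrightarrow> \<exists>s. (xof (E_mult m n j P) - r) * (xof P - r)^j = s^2"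
proof (induction j rule: nat_induct_at_least)
  case base then show ?case by (auto simp: power2_eq_square)
next
  case (Suc j)
  then obtain t where t: "(xof (E_mult m n j P) - r) * (xof P - r)^j = t^2" by auto
  obtain x1 y1 where S1: "P = Some (x1, y1)" using defined[of 1] Suc by (cases P) auto
  obtain xj yj where Sj: "E_mult m n j P = Some (xj, yj)" using defined[of j] Suc by auto
  obtain x3 y3 where S3: "E_mult m n (Suc j) P = Some (x3, y3)" using defined[of "Suc j"] Suc by auto
  have c1: "y1^2 = cubic m n x1" using P S1 by (simp add: on_E_Some)
  have cj: "yj^2 = cubic m n xj" using E_mult_closed[OF P, of j] Sj by (simp add: on_E_Some)
  have "E_add m n (Some (x1, y1)) (Some (xj, yj)) = Some (x3, y3)" using S3 S1 Sj by simp
  then obtain s where s: "(x1 - r) * (xj - r) * (x3 - r) = s^2"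
    using chord_product_square[OF c1 cj _ r] by blast
  have t': "(xj - r) * (x1 - r)^j = t^2" using t S1 Sj by (simp add: xof_def)
  have xj: "xj - r \<noteq> 0" using off_root[of j] Suc Sj by (simp add: xof_def)
  have "((x3 - r) * (x1 - r)^(Suc j)) * (xj - r)^2
      = ((x1 - r) * (xj - r) * (x3 - r)) * ((xj - r) * (x1 - r)^j)"
    by (simp add: power2_eq_square algebra_simps)
  also have "\<dots> = (s * t)^2" using s t' by (simp add: power_mult_distrib)
  finally have "((x3 - r) * (x1 - r)^(Suc j)) * (xj - r)^2 = (s * t)^2" .
  then have "(x3 - r) * (x1 - r)^(Suc j) = (s * t / (xj - r))^2"
    using xj by (simp add: power_divide field_simps)
  then show ?case using S1 S3 by (auto simp: xof_def)
qed

lemma half_order_root_differences_square: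
  assumes mn: "m \<noteq> 0" "n \<noteq> 0" "m \<noteq> n" and P: "on_E m n P"
    and H: "has_order m n P (2 * h)" and h: "even h"
  obtains e where "cubic m n e = 0" "\<And>r. cubic m n r = 0 \<Longrightarrow> r \<noteq> e \<Longrightarrow> \<exists>s. e - r = s^2"
proof -
  obtain e where Te: "E_mult m n h P = Some (e, 0)" and e: "cubic m n e = 0"
    using half_order_point[OF mn P H] by blast
  have h2: "2 \<le> h" using H h by (auto simp: has_order_def elim: evenE)
  have "\<exists>s. e - r = s^2" if r: "cubic m n r = 0" "r \<noteq> e" for r
  proof -
    have off_root: "xof (E_mult m n i P) \<noteq> r" if i: "0 < i" "i < h" for i
    proof -
      have "i < 2 * h" "2 * i \<noteq> 2 * h" using i by simp_all
      then obtain xi yi where "E_mult m n i P = Some (xi, yi)" "cubic m n xi \<noteq> 0"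
        by (metis regular_multiple[OF mn P H i(1)])
      then show ?thesis using r(1) by (auto simp: xof_def)
    qed
    have "\<exists>s. (xof (E_mult m n h P) - r) * (xof P - r)^h = s^2"
      by (rule multiples_descent[OF P r(1) _ off_root])
        (use has_order_nonzero[OF H] h2 in auto)
    then obtain s where s: "(e - r) * (xof P - r)^h = s^2" using Te by (auto simp: xof_def)
    obtain h' where hk: "h = 2 * h'" using h by (auto elim: evenE)
    have "xof P \<noteq> r" using off_root[of 1] h2 by simp
    then have "e - r = (s / (xof P - r)^h')^2"
      using s unfolding hk by (simp add: power_divide power_mult field_simps)
    then show ?thesis by blast
  qed
  then show ?thesis using that e by blast
qed

lemma squarefree_prime_dvd:
  fixes k l :: nat and u X Y :: int
  assumes sf: "squarefree k" and p: "prime l" and dk: "l dvd k"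
    and eq: "(int k * u) * X^2 = Y^2" and X: "X \<noteq> 0"
  shows "int l dvd u"
proof (rule ccontr)
  assume nd: "\<not> int l dvd u"
  have pi: "prime (int l)" using p by simp
  have k0: "k \<noteq> 0" using sf by (metis not_squarefree_0)
  have u0: "u \<noteq> 0" using nd by auto
  have Y0: "Y \<noteq> 0" using eq k0 u0 X by auto
  have k_ge: "multiplicity (int l) (int k) \<ge> 1"
    using dk k0 pi by (intro multiplicity_geI) auto
  have k_le: "multiplicity (int l) (int k) \<le> 1"
  proof (rule ccontr)
    assume "\<not> ?thesis"
    then have "(int l)^2 dvd int k" using k0 pi by (intro multiplicity_dvd') auto
    then have "l^2 dvd k" by (metis of_nat_dvd_iff of_nat_power)
    then have "l dvd 1" using sf squarefreeD by blast
    then show False using p by simp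
  qed
  have u_0: "multiplicity (int l) u = 0" using nd by (rule not_dvd_imp_multiplicity_0)
  have "multiplicity (int l) ((int k * u) * X^2) = multiplicity (int l) (Y^2)" using eq by simp
  then have "multiplicity (int l) (int k) + multiplicity (int l) u + 2 * multiplicity (int l) X
      = 2 * multiplicity (int l) Y"
    using pi k0 u0 X Y0
    by (simp add: prime_elem_multiplicity_mult_distrib prime_elem_multiplicity_power_distrib)
  then show False using k_ge k_le u_0 by presburger
qed

lemma rat_square_int:
  assumes "(of_int z :: rat) = s^2"
  obtains a b where "b \<noteq> 0" "z * b^2 = a^2"
proof -
  obtain a b where q: "quotient_of s = (a, b)" by (cases "quotient_of s")
  have s: "s = of_int a / of_int b" using q by (rule quotient_of_div)
  have b: "b > 0" using q by (rule quotient_of_denom_pos)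
  have "(of_int z :: rat) * (of_int b)^2 = (of_int a)^2"
    using assms b unfolding s by (simp add: power_divide field_simps)
  then have "z * b^2 = a^2" by (metis of_int_eq_iff of_int_mult of_int_power)
  then show ?thesis using b by (intro that[of b a]) auto
qed

text \<open>If \<open>pk\<close> and \<open>(p + q)k\<close> are rational squares, every prime factor of \<open>k\<close> divides both
  \<open>p\<close> and \<open>q\<close>; so \<open>k = 1\<close>.\<close>

lemma squares_imp_k_eq_1:
  fixes p q k :: nat
  assumes cop: "coprime p q" and sf: "squarefree k"
    and s: "(of_int (int p * int k) :: rat) = s^2" and t: "(of_int ((int p + int q) * int k) :: rat) = t^2"
  shows "k = 1"
proof (rule ccontr)
  assume "k \<noteq> 1"
  then obtain l where l: "prime l" "l dvd k" using prime_factor_nat by blast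
  obtain a b where ab: "b \<noteq> 0" "(int p * int k) * b^2 = a^2" using rat_square_int[OF s] by blast
  obtain a' b' where ab': "b' \<noteq> 0" "((int p + int q) * int k) * b'^2 = a'^2"
    using rat_square_int[OF t] by blast
  have "int l dvd int p"
    by (rule squarefree_prime_dvd[OF sf l, of _ b a]) (use ab in \<open>simp_all add: mult.commute\<close>)
  moreover have "int l dvd int p + int q"
    by (rule squarefree_prime_dvd[OF sf l, of _ b' a']) (use ab' in \<open>simp_all add: mult.commute\<close>)
  ultimately have "l dvd p" "l dvd q" by (simp, metis dvd_add_right_iff of_nat_dvd_iff)
  then show False using cop l(1) by (metis coprime_common_divisor not_prime_unit)
qed

lemma curve_signs:
  fixes p q k :: nat
  assumes "0 < p" "0 < q" "squarefree k"
  shows "- (int p * int k) < 0" "0 < int q * int k"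
proof -
  have "0 < k" using assms(3) by (metis not_squarefree_0 gr0I)
  then show "- (int p * int k) < 0" "0 < int q * int k" using assms(1,2) by simp_all
qed

text \<open>Part (i), for any order divisible by 4: the root \<open>e\<close> of \<open>hP = (e, 0)\<close> exceeds the
  other two roots \<open>0\<close> and \<open>-n\<close>, hence \<open>e = -m = pk\<close>, and both \<open>pk\<close> and \<open>pk + qk\<close> are squares.\<close>

lemma order_4_dvd_imp_k_eq_1:
  fixes p q k :: nat
  defines "m \<equiv> - (int p * int k)" and "n \<equiv> int q * int k"
  assumes pq: "0 < p" "0 < q" "coprime p q" and sf: "squarefree k"
    and P: "on_E m n P" and H: "has_order m n P N" and four: "4 dvd N"
  shows "k = 1"
proof -
  have "m < 0" "0 < n" using curve_signs[OF pq(1,2) sf] by (simp_all add: m_def n_def)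
  then have m: "(of_int m :: rat) < 0" and n: "(of_int n :: rat) > 0" and mn: "m \<noteq> 0" "n \<noteq> 0" "m \<noteq> n"
    by simp_all
  obtain j where "N = 4 * j" using four by (auto elim: dvdE)
  then have H': "has_order m n P (2 * (2 * j))" using H by simp
  obtain e where e: "cubic m n e = 0" and sq: "\<And>r. cubic m n r = 0 \<Longrightarrow> r \<noteq> e \<Longrightarrow> \<exists>s. e - r = s^2"
    using half_order_root_differences_square[OF mn P H'] by auto
  have roots: "cubic m n 0 = 0" "cubic m n (- of_int m) = 0" "cubic m n (- of_int n) = 0"
    by (simp_all add: cubic_def)
  have nonneg: "0 \<le> e - r" if r: "cubic m n r = 0" "r \<noteq> e" for r
  proof -
    obtain s where "e - r = s^2" using sq[OF r] by blast
    then show ?thesis by simp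
  qed
  have "e \<noteq> 0" using nonneg[OF roots(2)] m by force
  moreover have "e \<noteq> - of_int n" using nonneg[OF roots(1)] n by force
  ultimately have em: "e = - of_int m" using e by (auto simp: cubic_def add_eq_0_iff2)
  obtain s where s: "- of_int m - 0 = (s :: rat)^2" using sq[OF roots(1)] em m by auto
  obtain t where t: "- of_int m - (- of_int n) = (t :: rat)^2" using sq[OF roots(3)] em mn by auto
  show "k = 1"
    by (rule squares_imp_k_eq_1[OF pq(3) sf, of s t]) (use s t in \<open>simp_all add: m_def n_def algebra_simps\<close>)
qed

section \<open>Part (ii): points of order 3 and 6\<close>

text \<open>An affine point whose double has the same \<open>x\<close>-coordinate, i.e.\ a flex of the curve;
  these are exactly the points of order 3.\<close>

definition is_flex :: "int \<Rightarrow> int \<Rightarrow> rat \<Rightarrow> rat \<Rightarrow> bool" where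
  "is_flex m n x y \<longleftrightarrow> y^2 = cubic m n x \<and> y \<noteq> 0 \<and>
     (\<exists>y'. E_add m n (Some (x, y)) (Some (x, y)) = Some (x, y'))"

lemma order_3_flex:
  assumes P: "on_E m n P" and H: "has_order m n P 3"
  obtains x y where "P = Some (x, y)" "is_flex m n x y"
proof -
  have P2: "E_add m n P P \<noteq> None" using has_order_nonzero[OF H, of 2] by (simp add: numeral_2_eq_2)
  have P3: "E_add m n P (E_add m n P P) = None" using H by (simp add: has_order_def numeral_3_eq_3)
  obtain x y where S: "P = Some (x, y)" using P2 by (cases P) auto
  obtain x2 y2 where S2: "E_add m n P P = Some (x2, y2)" using P2 by auto
  have "x = x2 \<and> y = - y2" using P3 S S2 E_add_eq_None_iff by simp
  moreover have "y \<noteq> 0" using P2 S E_add_eq_None_iff by auto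
  moreover have "y^2 = cubic m n x" using P S by (simp add: on_E_Some)
  ultimately show ?thesis using that S S2 by (auto simp: is_flex_def)
qed

definition double_x :: "int \<Rightarrow> int \<Rightarrow> rat \<Rightarrow> rat" where
  "double_x m n t = (t^2 - of_int m * of_int n)^2 / (4 * cubic m n t)"

lemma double_x_formula:
  fixes t yt M N :: rat
  assumes "yt^2 = t * (t + M) * (t + N)" "yt \<noteq> 0"
  shows "((3 * t^2 + 2 * (M + N) * t + M * N) / (2 * yt))^2 - (M + N) - t - t
       = (t^2 - M * N)^2 / (4 * (t * (t + M) * (t + N)))"
proof -
  have nz: "t * (t + M) * (t + N) \<noteq> 0" using assms by (metis power_not_zero)
  have "((3 * t^2 + 2 * (M + N) * t + M * N) / (2 * yt))^2
      = (3 * t^2 + 2 * (M + N) * t + M * N)^2 / (4 * (t * (t + M) * (t + N)))"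
    using assms(1) by (simp add: power_divide power_mult_distrib)
  moreover have "(3 * t^2 + 2 * (M + N) * t + M * N)^2 / (4 * (t * (t + M) * (t + N))) - (M + N) - t - t
      = (t^2 - M * N)^2 / (4 * (t * (t + M) * (t + N)))"
    using nz by (simp add: divide_simps) algebra
  ultimately show ?thesis by simp
qed

lemma E_add_double:
  assumes "yt^2 = cubic m n t" and "yt \<noteq> 0"
  obtains yy where "E_add m n (Some (t, yt)) (Some (t, yt)) = Some (double_x m n t, yy)"
proof -
  have nc: "\<not> (t = t \<and> yt = - yt)" using assms(2) by simp
  have "((3 * t^2 + 2 * (of_int m + of_int n) * t + of_int m * of_int n) / (2 * yt))^2
       - (of_int m + of_int n) - t - t = double_x m n t"
    unfolding double_x_def cubic_def by (rule double_x_formula) (use assms in \<open>simp_all add: cubic_def\<close>)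
  then show ?thesis using that by (simp add: E_add_Some_Some[OF nc] Let_def slope_def)
qed

text \<open>Translating by the point \<open>(-M, 0)\<close> of order 2 (and, symmetrically, \<open>(-N, 0)\<close>) or by
  \<open>(0, 0)\<close> does not change the \<open>x\<close>-coordinate of the double, since \<open>2T = 0\<close>.  The two
  identities below express this after clearing denominators.\<close>

lemma translation_invariance_root_M:
  fixes x xr M N :: rat
  assumes F: "x * (x + M) * (x + N) \<noteq> 0" and xr: "xr = - M * (x + N) / (x + M)"
  shows "(xr^2 - M * N)^2 * (x * (x + M) * (x + N)) = (x^2 - M * N)^2 * (xr * (xr + M) * (xr + N))"
proof -
  have xM: "x + M \<noteq> 0" using F by auto
  have a: "xr^2 - M * N = M * (M - N) * (x^2 - M * N) / (x + M)^2" unfolding xr using xM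
    by (simp add: field_simps) algebra
  have b: "xr + M = M * (M - N) / (x + M)" unfolding xr using xM by (simp add: field_simps)
  have c: "xr + N = (N - M) * x / (x + M)" unfolding xr using xM by (simp add: field_simps)
  obtain u where u: "x + M = u" by blast
  have u0: "u \<noteq> 0" using xM u by simp
  have d: "xr = - M * (x + N) / u" using xr u by simp
  have "(xr^2 - M * N)^2 * (x * (x + M) * (x + N)) = (M * (M - N) * (x^2 - M * N))^2 * (x * u * (x + N)) / u^4"
    unfolding a u using u0 by (simp add: field_simps)
  also have "\<dots> = (x^2 - M * N)^2 * ((- M * (x + N)) * (M * (M - N)) * ((N - M) * x) / u^3)"
    using u0 by (simp add: field_simps) algebra
  also have "(- M * (x + N)) * (M * (M - N)) * ((N - M) * x) / u^3 = xr * (xr + M) * (xr + N)"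
  proof -
    have "xr * (xr + M) * (xr + N) = (- M * (x + N) / u) * (M * (M - N) / u) * ((N - M) * x / u)"
      using b c d u by simp
    then show ?thesis by (simp add: power3_eq_cube)
  qed
  finally show ?thesis .
qed

lemma translation_invariance_root_0:
  fixes x xr M N :: rat
  assumes F: "x * (x + M) * (x + N) \<noteq> 0" and xr: "xr = M * N / x"
  shows "(xr^2 - M * N)^2 * (x * (x + M) * (x + N)) = (x^2 - M * N)^2 * (xr * (xr + M) * (xr + N))"
proof -
  have x0: "x \<noteq> 0" using F by auto
  have a: "xr^2 - M * N = M * N * (M * N - x^2) / x^2" unfolding xr using x0
    by (simp add: field_simps) algebra
  have b: "xr + M = M * (N + x) / x" unfolding xr using x0 by (simp add: field_simps)
  have c: "xr + N = N * (M + x) / x" unfolding xr using x0 by (simp add: field_simps)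
  show ?thesis unfolding a b c using x0 by (simp add: xr field_simps) algebra
qed

lemma translation_invariance:
  fixes x e xr M N :: rat
  assumes F: "x * (x + M) * (x + N) \<noteq> 0" and e: "e = 0 \<or> e = - M \<or> e = - N"
    and xr: "xr = x * (x + M) * (x + N) / (x - e)^2 - (M + N) - x - e"
  shows "(xr^2 - M * N)^2 * (x * (x + M) * (x + N)) = (x^2 - M * N)^2 * (xr * (xr + M) * (xr + N))"
  using e
proof (elim disjE)
  assume e0: "e = 0"
  have x0: "x \<noteq> 0" using F by auto
  have "xr = M * N / x" using xr e0 x0 by (simp add: field_simps power2_eq_square)
  then show ?thesis by (rule translation_invariance_root_0[OF F])
next
  assume eM: "e = - M"
  have x0: "x + M \<noteq> 0" using F by auto
  have "x * (x + M) * (x + N) / (x + M)^2 = x * (x + N) / (x + M)"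
    using x0 by (simp add: power2_eq_square)
  then have "xr = x * (x + N) / (x + M) - N - x" using xr eM by simp
  also have "\<dots> = - M * (x + N) / (x + M)" using x0 by (simp add: field_simps)
  finally show ?thesis by (rule translation_invariance_root_M[OF F])
next
  assume eN: "e = - N"
  have x0: "x + N \<noteq> 0" using F by auto
  have F': "x * (x + N) * (x + M) \<noteq> 0" using F by (simp add: ac_simps)
  have "x * (x + M) * (x + N) / (x + N)^2 = x * (x + M) / (x + N)"
    using x0 by (simp add: power2_eq_square)
  then have "xr = x * (x + M) / (x + N) - M - x" using xr eN by simp
  also have "\<dots> = - N * (x + M) / (x + N)" using x0 by (simp add: field_simps)
  finally show ?thesis using translation_invariance_root_M[OF F'] by (simp add: ac_simps)
qed

lemma double_x_translation_invariant:
  assumes e: "cubic m n e = 0" and F: "cubic m n x \<noteq> 0" and Fr: "cubic m n xr \<noteq> 0"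
    and xr: "xr = cubic m n x / (x - e)^2 - (of_int m + of_int n) - x - e"
  shows "double_x m n xr = double_x m n x"
proof -
  define M where "M = (of_int m :: rat)"
  define N where "N = (of_int n :: rat)"
  have F': "x * (x + M) * (x + N) \<noteq> 0" using F by (simp add: cubic_def M_def N_def)
  have Fr': "xr * (xr + M) * (xr + N) \<noteq> 0" using Fr by (simp add: cubic_def M_def N_def)
  have "e = 0 \<or> e = - M \<or> e = - N" using e by (auto simp: cubic_def M_def N_def add_eq_0_iff2)
  moreover have "xr = x * (x + M) * (x + N) / (x - e)^2 - (M + N) - x - e"
    using xr by (simp add: cubic_def M_def N_def)
  ultimately have "(xr^2 - M * N)^2 * (x * (x + M) * (x + N))
      = (x^2 - M * N)^2 * (xr * (xr + M) * (xr + N))"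
    by (rule translation_invariance[OF F'])
  then have "(xr^2 - M * N)^2 * (4 * (x * (x + M) * (x + N)))
      = (x^2 - M * N)^2 * (4 * (xr * (xr + M) * (xr + N)))"
    by (metis mult.left_commute)
  moreover have "4 * (xr * (xr + M) * (xr + N)) \<noteq> 0" "4 * (x * (x + M) * (x + N)) \<noteq> 0"
    using F' Fr' by simp_all
  ultimately have "(xr^2 - M * N)^2 / (4 * (xr * (xr + M) * (xr + N)))
      = (x^2 - M * N)^2 / (4 * (x * (x + M) * (x + N)))"
    by (simp add: frac_eq_eq)
  then show ?thesis by (simp add: double_x_def cubic_def M_def N_def)
qed

text \<open>For \<open>P\<close> of order 6, with \<open>T = 3P\<close> of order 2, the point \<open>4P = P + T\<close> is a flex:
  \<open>2(4P) = 2P = -(4P)\<close> at the level of \<open>x\<close>-coordinates, by translation invariance.\<close>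

lemma order_6_flex:
  assumes mn: "m \<noteq> 0" "n \<noteq> 0" "m \<noteq> n" and P: "on_E m n P" and H: "has_order m n P 6"
  obtains x y where "is_flex m n x y"
proof -
  obtain x y where S: "P = Some (x, y)" "y \<noteq> 0" "cubic m n x \<noteq> 0"
    using regular_multiple[OF mn P H, of 1] by auto
  obtain e where Te: "E_mult m n 3 P = Some (e, 0)" and e: "cubic m n e = 0"
    using half_order_point[OF mn P, of 3] H by auto
  obtain xr yr where R: "E_mult m n 4 P = Some (xr, yr)" "yr \<noteq> 0" "cubic m n xr \<noteq> 0"
    using regular_multiple[OF mn P H, of 4] by auto
  have c: "y^2 = cubic m n x" using P S by (simp add: on_E_Some)
  have cr: "yr^2 = cubic m n xr" using E_mult_closed[OF P, of 4] R by (simp add: on_E_Some)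
  have "E_mult m n 4 P = E_add m n P (E_mult m n 3 P)" by (simp add: numeral_eq_Suc)
  then have "E_add m n (Some (x, y)) (Some (e, 0)) = Some (xr, yr)" using R Te S by simp
  moreover have xe: "x \<noteq> e" using S(3) e by auto
  ultimately have "xr = ((0 - y) / (e - x))^2 - (of_int m + of_int n) - x - e"
    by (simp add: E_add_Some_Some Let_def slope_def)
  then have xr: "xr = cubic m n x / (x - e)^2 - (of_int m + of_int n) - x - e"
    using c by (simp add: power_divide power2_commute)
  have N6: "E_mult m n 6 P = None" using H by (simp add: has_order_def)
  have "E_mult m n 2 P = neg_pt (E_mult m n 4 P)" using E_mult_complement[OF mn P N6, of 4] by simp
  moreover have "E_mult m n 2 P = E_add m n P P" by (simp add: numeral_eq_Suc)
  moreover obtain yy where "E_add m n (Some (x, y)) (Some (x, y)) = Some (double_x m n x, yy)"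
    using E_add_double[OF c S(2)] by blast
  ultimately have "xr = double_x m n x" using R S by simp
  also have "\<dots> = double_x m n xr" using double_x_translation_invariant[OF e S(3) R(3) xr] by simp
  finally obtain yy' where "E_add m n (Some (xr, yr)) (Some (xr, yr)) = Some (xr, yy')"
    using E_add_double[OF cr R(2)] by metis
  then show ?thesis using that cr R(2) by (auto simp: is_flex_def)
qed

text \<open>At a flex the tangent \<open>y = l(z - x) + y\<close> has triple contact, so at each root \<open>z0\<close> of
  the cubic \<open>(l(z0 - x) + y)^2 = (x - z0)^3\<close>; the following square-and-cube roots then
  parametrise \<open>m\<close> and \<open>n\<close>.\<close>

lemma square_cube_root:
  fixes a b :: "'a :: field"
  assumes "a^2 = b^3" "b \<noteq> 0"
  shows "(a / b)^2 = b" "(a / b)^3 = a"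
proof -
  have a0: "a \<noteq> 0" using assms by auto
  show "(a / b)^2 = b" using assms by (simp add: power_divide power2_eq_square power3_eq_cube field_simps)
  then show "(a / b)^3 = a" using assms a0
    by (simp add: power_divide power2_eq_square power3_eq_cube field_simps)
qed

lemma flex_parametrisation_algebra:
  fixes c d w l M N :: rat
  assumes c2: "c^2 = w^2 + M" and c3: "c^3 = w^3 - l * M"
    and d2: "d^2 = w^2 + N" and d3: "d^3 = w^3 - l * N"
    and M: "M \<noteq> 0" and N: "N \<noteq> 0" and MN: "M \<noteq> N"
  shows "c + d \<noteq> 0" "M * (c + d)^2 = c^3 * (c + 2 * d)" "N * (c + d)^2 = d^3 * (d + 2 * c)"
proof -
  have "c \<noteq> w" using c2 M by auto
  moreover have "(c - w) * (l * (c + w) + (c^2 + c * w + w^2)) = 0" using c2 c3 by algebra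
  ultimately have lc: "l * (c + w) = - (c^2 + c * w + w^2)" by (simp add: eq_neg_iff_add_eq_0)
  have "d \<noteq> w" using d2 N by auto
  moreover have "(d - w) * (l * (d + w) + (d^2 + d * w + w^2)) = 0" using d2 d3 by algebra
  ultimately have ld: "l * (d + w) = - (d^2 + d * w + w^2)" by (simp add: eq_neg_iff_add_eq_0)
  have cd: "c \<noteq> d" using c2 d2 MN by auto
  moreover have "(c - d) * (w * (c + d) + c * d) = 0" using lc ld by algebra
  ultimately have wcd: "w * (c + d) = - (c * d)" by (simp add: eq_neg_iff_add_eq_0)
  show "c + d \<noteq> 0"
  proof
    assume h: "c + d = 0"
    then have "c * d = 0" using wcd by simp
    then show False using h cd by auto
  qed
  show "M * (c + d)^2 = c^3 * (c + 2 * d)" using c2 wcd by algebra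
  show "N * (c + d)^2 = d^3 * (d + 2 * c)" using d2 wcd by algebra
qed

lemma flex_parametrisation:
  assumes mn: "m \<noteq> 0" "n \<noteq> 0" "m \<noteq> n" and flex: "is_flex m n x y"
  obtains c d :: rat where "c + d \<noteq> 0"
    "of_int m * (c + d)^2 = c^3 * (c + 2 * d)" "of_int n * (c + d)^2 = d^3 * (d + 2 * c)"
proof -
  define M where "M = (of_int m :: rat)"
  define N where "N = (of_int n :: rat)"
  have M0: "M \<noteq> 0" and N0: "N \<noteq> 0" and MN: "M \<noteq> N" using mn by (simp_all add: M_def N_def)
  obtain y' where c1: "y^2 = cubic m n x" and y0: "y \<noteq> 0"
    and D: "E_add m n (Some (x, y)) (Some (x, y)) = Some (x, y')"
    using flex by (auto simp: is_flex_def)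
  have nc: "\<not> (x = x \<and> y = - y)" using y0 by simp
  obtain l where E: "E_add m n (Some (x, y)) (Some (x, y)) =
       Some (l^2 - (M + N) - x - x, - (l * (l^2 - (M + N) - x - x - x) + y))"
    and Z: "\<And>z. cubic m n z - (l * (z - x) + y)^2 = (z - x) * (z - x) * (z - (l^2 - (M + N) - x - x))"
    using E_add_line[OF c1 c1 nc] unfolding M_def N_def by blast
  have "l^2 - (M + N) - x - x = x" using E D by simp
  then have triple: "z * (z + M) * (z + N) - (l * (z - x) + y)^2 = (z - x)^3" for z
    using Z[of z] by (simp add: cubic_def M_def N_def power3_eq_cube)
  have "x * (x + M) * (x + N) \<noteq> 0" using c1 y0 by (metis cubic_def M_def N_def power_not_zero)
  then have x0: "x \<noteq> 0" and xM: "x + M \<noteq> 0" and xN: "x + N \<noteq> 0" by auto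
  define \<nu> where "\<nu> = y - l * x"
  define w where "w = \<nu> / x"
  define c where "c = (\<nu> - l * M) / (x + M)"
  define d where "d = (\<nu> - l * N) / (x + N)"
  have "\<nu>^2 = x^3" using triple[of 0] unfolding \<nu>_def
    by (simp add: power2_eq_square power3_eq_cube algebra_simps)
  then have w: "w^2 = x" "w^3 = \<nu>" unfolding w_def using square_cube_root x0 by blast+
  have "(\<nu> - l * M)^2 = (x + M)^3" using triple[of "- M"] unfolding \<nu>_def
    by (simp add: power2_eq_square power3_eq_cube algebra_simps)
  then have c: "c^2 = x + M" "c^3 = \<nu> - l * M" unfolding c_def using square_cube_root xM by blast+
  have "(\<nu> - l * N)^2 = (x + N)^3" using triple[of "- N"] unfolding \<nu>_def
    by (simp add: power2_eq_square power3_eq_cube algebra_simps)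
  then have d: "d^2 = x + N" "d^3 = \<nu> - l * N" unfolding d_def using square_cube_root xN by blast+
  have "c^2 = w^2 + M" "c^3 = w^3 - l * M" "d^2 = w^2 + N" "d^3 = w^3 - l * N"
    using c d w by simp_all
  from flex_parametrisation_algebra[OF this M0 N0 MN] show ?thesis
    using that unfolding M_def N_def by blast
qed

lemma common_denominator:
  fixes c d :: rat
  obtains C E D :: int where "D \<noteq> 0" "c = of_int C / of_int D" "d = of_int E / of_int D"
proof -
  obtain a1 b1 where q1: "quotient_of c = (a1, b1)" by (cases "quotient_of c")
  obtain a2 b2 where q2: "quotient_of d = (a2, b2)" by (cases "quotient_of d")
  have c: "c = of_int a1 / of_int b1" and b1: "b1 > 0"
    using q1 by (rule quotient_of_div, rule quotient_of_denom_pos)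
  have d: "d = of_int a2 / of_int b2" and b2: "b2 > 0"
    using q2 by (rule quotient_of_div, rule quotient_of_denom_pos)
  show ?thesis
    by (rule that[of "b1 * b2" "a1 * b2" "a2 * b1"]) (use b1 b2 in \<open>simp_all add: c d field_simps\<close>)
qed

lemma clear_denominators:
  fixes M C E D :: int
  assumes D: "D \<noteq> 0"
    and eq: "of_int M * ((of_int C + of_int E) / of_int D)^2
      = (of_int C / of_int D)^3 * (of_int C / of_int D + 2 * (of_int E / of_int D) :: rat)"
  shows "M * (C + E)^2 * D^2 = C^3 * (C + 2 * E)"
proof -
  have "(of_int D)^4 * (of_int M * ((of_int C + of_int E) / of_int D)^2)
      = (of_int D)^4 * ((of_int C / of_int D)^3 * (of_int C / of_int D + 2 * (of_int E / of_int D)) :: rat)"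
    using eq by simp
  moreover have "(of_int D)^4 * (of_int M * ((of_int C + of_int E) / of_int D)^2)
      = (of_int M * (of_int C + of_int E)^2 * (of_int D)^2 :: rat)"
    using D by (simp add: field_simps power2_eq_square power4_eq_xxxx)
  moreover have "(of_int D)^4 * ((of_int C / of_int D)^3 * (of_int C / of_int D + 2 * (of_int E / of_int D)))
      = ((of_int C)^3 * (of_int C + 2 * of_int E) :: rat)"
    using D by (simp add: field_simps power3_eq_cube power4_eq_xxxx)
  ultimately have "(of_int (M * (C + E)^2 * D^2) :: rat) = of_int (C^3 * (C + 2 * E))"
    by simp
  then show ?thesis by (rule of_int_eq_iff[THEN iffD1])
qed

lemma integral_parametrisation:
  fixes M N :: int and c d :: rat
  assumes cd: "c + d \<noteq> 0"
    and hM: "of_int M * (c + d)^2 = c^3 * (c + 2 * d)" and hN: "of_int N * (c + d)^2 = d^3 * (d + 2 * c)"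
  obtains a b X g :: int where "coprime a b" "X \<noteq> 0" "g \<noteq> 0"
    "M * X^2 = g^2 * (a^3 * (a + 2 * b))" "N * X^2 = g^2 * (b^3 * (b + 2 * a))"
proof -
  obtain C E D :: int where D: "D \<noteq> 0" and c: "c = of_int C / of_int D" and d: "d = of_int E / of_int D"
    by (rule common_denominator)
  have eM: "M * (C + E)^2 * D^2 = C^3 * (C + 2 * E)"
    by (rule clear_denominators[OF D]) (use hM in \<open>simp add: c d add_divide_distrib\<close>)
  have eN: "N * (E + C)^2 * D^2 = E^3 * (E + 2 * C)"
    by (rule clear_denominators[OF D]) (use hN in \<open>simp add: c d add_divide_distrib add.commute\<close>)
  have CE: "C + E \<noteq> 0" using cd unfolding c d by (auto simp: add_divide_distrib[symmetric])
  then have g0: "gcd C E \<noteq> 0" by auto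
  obtain a b where ab: "C = a * gcd C E" "E = b * gcd C E" "coprime a b"
    using gcd_coprime_exists[OF g0] by blast
  define g where "g = gcd C E"
  have Cg: "C = a * g" and Eg: "E = b * g" using ab g_def by auto
  have g2: "g^2 \<noteq> 0" using g0 g_def by simp
  have X0: "(a + b) * D \<noteq> 0" using CE D unfolding Cg Eg by (auto simp: distrib_right[symmetric])
  have "g^2 * (M * ((a + b) * D)^2) = g^2 * (g^2 * (a^3 * (a + 2 * b)))"
    using eM unfolding Cg Eg by algebra
  then have eM': "M * ((a + b) * D)^2 = g^2 * (a^3 * (a + 2 * b))" using g2 by (metis mult_left_cancel)
  have "g^2 * (N * ((a + b) * D)^2) = g^2 * (g^2 * (b^3 * (b + 2 * a)))"
    using eN unfolding Cg Eg by algebra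
  then have eN': "N * ((a + b) * D)^2 = g^2 * (b^3 * (b + 2 * a))" using g2 by (metis mult_left_cancel)
  show ?thesis by (rule that[OF ab(3) X0 _ eM' eN']) (use g0 in \<open>simp add: g_def\<close>)
qed

lemma prime_dvd_both_imp_dvd_3:
  fixes l a b :: int
  assumes l: "prime l" and cop: "coprime a b"
    and dA: "l dvd a^3 * (a + 2 * b)" and dB: "l dvd b^3 * (b + 2 * a)"
  shows "l dvd 3"
proof (rule ccontr)
  assume n3: "\<not> l dvd 3"
  have nab: "\<not> (l dvd a \<and> l dvd b)"
    using cop l by (metis coprime_common_divisor not_prime_unit)
  have hA: "l dvd a \<or> l dvd a + 2 * b" using dA l by (simp add: prime_dvd_mult_iff prime_dvd_power_iff)
  have hB: "l dvd b \<or> l dvd b + 2 * a" using dB l by (simp add: prime_dvd_mult_iff prime_dvd_power_iff)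
  consider "l dvd a" | "l dvd b" | "l dvd a + 2 * b" "l dvd b + 2 * a" using hA hB by blast
  then show False
  proof cases
    case 1
    then have "l dvd b" using hB nab by (metis dvd_add_left_iff dvd_mult)
    with 1 nab show False by blast
  next
    case 2
    then have "l dvd a" using hA nab by (metis dvd_add_left_iff dvd_mult)
    with 2 nab show False by blast
  next
    case 3
    then have "l dvd 2 * (a + 2 * b) - (b + 2 * a)" by (intro dvd_diff dvd_mult)
    then have "l dvd 3 * b" by (simp add: algebra_simps)
    then have "l dvd b" using n3 l by (simp add: prime_dvd_mult_iff)
    moreover have "l dvd 2 * b - (a + 2 * b)" using 3 \<open>l dvd b\<close> by (intro dvd_diff dvd_mult)
    then have "l dvd a" by (simp add: dvd_minus_iff)
    ultimately show False using nab by blast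
  qed
qed

lemma squarefree_only_prime_3:
  fixes k :: nat
  assumes sf: "squarefree k" and H: "\<And>l. prime l \<Longrightarrow> l dvd k \<Longrightarrow> l = 3"
  shows "k = 1 \<or> k = 3"
proof (rule ccontr)
  assume ne: "\<not> (k = 1 \<or> k = 3)"
  then obtain l where l: "prime l" "l dvd k" using prime_factor_nat by blast
  then obtain j where j: "k = 3 * j" using H by blast
  then have "j \<noteq> 1" using ne by auto
  then obtain l' where l': "prime l'" "l' dvd j" using prime_factor_nat by blast
  then have "l' = 3" using H j by auto
  then have "(3::nat)^2 dvd k" using j l' by (auto simp: power2_eq_square)
  then have "(3::nat) dvd 1" using sf squarefreeD by blast
  then show False by simp
qed

text \<open>From \<open>-pk X^2 = g^2 A\<close> and \<open>qk X^2 = g^2 B\<close>: coprimality of \<open>p, q\<close> gives \<open>A = -pt\<close>,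
  \<open>B = qt\<close> and \<open>k t X^2 = (g t)^2\<close>; so each prime factor of \<open>k\<close> divides \<open>t\<close>, hence \<open>A\<close> and \<open>B\<close>, hence 3.\<close>

lemma parametrisation_imp_k_eq_1_or_3:
  fixes p q k :: nat and a b X g :: int
  assumes p: "0 < p" and cop: "coprime p q" and sf: "squarefree k" and ab: "coprime a b"
    and X: "X \<noteq> 0" and g: "g \<noteq> 0"
    and eM: "- (int p * int k) * X^2 = g^2 * (a^3 * (a + 2 * b))"
    and eN: "int q * int k * X^2 = g^2 * (b^3 * (b + 2 * a))"
  shows "k = 1 \<or> k = 3"
proof -
  define A where "A = a^3 * (a + 2 * b)"
  define B where "B = b^3 * (b + 2 * a)"
  have eMA: "- (int p * int k) * X^2 = g^2 * A" and eNB: "int q * int k * X^2 = g^2 * B"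
    using eM eN by (simp_all add: A_def B_def)
  have "g^2 * (int q * A + int p * B) = 0" using eMA eNB by algebra
  then have qA: "int q * A = - (int p * B)" using g by (simp add: eq_neg_iff_add_eq_0)
  have "int p dvd int q * A" using qA by (metis dvd_minus_iff dvd_triv_left)
  moreover have "coprime (int p) (int q)" using cop by simp
  ultimately have "int p dvd A" by (simp add: coprime_dvd_mult_right_iff)
  then obtain t0 where "A = int p * t0" by blast
  define t where "t = - t0"
  have t: "A = - (int p * t)" using \<open>A = int p * t0\<close> by (simp add: t_def)
  have p0: "int p \<noteq> 0" using p by simp
  have "int p * (int q * t) = int p * B" using qA t by (simp add: algebra_simps)
  then have Bt: "B = int q * t" using p0 by simp
  have "int p * (int k * X^2) = int p * (g^2 * t)" using eMA t by algebra
  then have "(int k * t) * X^2 = (g * t)^2" using p0 by (simp add: power_mult_distrib algebra_simps power2_eq_square)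
  show ?thesis
  proof (rule squarefree_only_prime_3[OF sf])
    fix l assume l: "prime l" "l dvd k"
    have "int l dvd t" by (rule squarefree_prime_dvd[OF sf l \<open>(int k * t) * X^2 = (g * t)^2\<close> X])
    then have "int l dvd A" "int l dvd B" unfolding t Bt by auto
    then have "int l dvd 3" using prime_dvd_both_imp_dvd_3[of "int l" a b] l ab unfolding A_def B_def by simp
    then have "l dvd 3" by (metis of_nat_dvd_iff of_nat_numeral)
    then show "l = 3" using l(1) primes_dvd_imp_eq[of l 3] by simp
  qed
qed

lemma order_3_or_6_imp_k_eq_1_or_3:
  fixes p q k :: nat
  defines "m \<equiv> - (int p * int k)" and "n \<equiv> int q * int k"
  assumes pq: "0 < p" "0 < q" "coprime p q" and sf: "squarefree k"
    and P: "on_E m n P" and H: "has_order m n P N" and N: "N = 3 \<or> N = 6"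
  shows "k = 1 \<or> k = 3"
proof -
  have "m < 0" "0 < n" using curve_signs[OF pq(1,2) sf] by (simp_all add: m_def n_def)
  then have mn: "m \<noteq> 0" "n \<noteq> 0" "m \<noteq> n" by auto
  obtain x y where "is_flex m n x y"
  proof (cases "N = 3")
    case True then show ?thesis using order_3_flex[OF P] H that by blast
  next
    case False then show ?thesis using order_6_flex[OF mn P] H N that by blast
  qed
  then obtain c d :: rat where cd: "c + d \<noteq> 0"
    "of_int m * (c + d)^2 = c^3 * (c + 2 * d)" "of_int n * (c + d)^2 = d^3 * (d + 2 * c)"
    using flex_parametrisation[OF mn] by blast
  then obtain a b X g :: int where "coprime a b" "X \<noteq> 0" "g \<noteq> 0"
    "m * X^2 = g^2 * (a^3 * (a + 2 * b))" "n * X^2 = g^2 * (b^3 * (b + 2 * a))"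
    by (rule integral_parametrisation)
  then show ?thesis
    using parametrisation_imp_k_eq_1_or_3[OF pq(1,3) sf] unfolding m_def n_def by blast
qed

theorem theorem4p1:
  fixes p q k :: nat
  assumes "0 < p" and "0 < q" and "coprime p q" and "squarefree k"
  shows "(concordant_torsion (- (int p * int k)) (int q * int k) 4 \<or>
          concordant_torsion (- (int p * int k)) (int q * int k) 8 \<longrightarrow> k = 1) \<and>
         (concordant_torsion (- (int p * int k)) (int q * int k) 3 \<or>
          concordant_torsion (- (int p * int k)) (int q * int k) 6 \<longrightarrow> k = 1 \<or> k = 3)"
proof -
  have four: "k = 1" if "concordant_torsion (- (int p * int k)) (int q * int k) N" "4 dvd N" for N
    using concordant_torsion_point[OF that(1)] order_4_dvd_imp_k_eq_1[OF assms _ _ that(2)] by blast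
  have three: "k = 1 \<or> k = 3"
    if "concordant_torsion (- (int p * int k)) (int q * int k) N" "N = 3 \<or> N = 6" for N
    using concordant_torsion_point[OF that(1)] order_3_or_6_imp_k_eq_1_or_3[OF assms _ _ that(2)]
    by blast
  show ?thesis using four[of 4] four[of 8] three[of 3] three[of 6] by auto
qed

end
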